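(* Let $S_j$ be local potentials satisfying (A)–(E) and let $K\subset\mathbb{R}^d$ be compact. There is, for every $n\in\mathbb{N}$, a constant $\delta_n>0$ depending only on $K$, $n$ (and the potentials) such that the following holds: if $x<y$ are two Birkhoff configurations with rotation vectors in $K$ that are both stationary, then for all $i,k\in\mathbb{Z}^d$, $$y_k-x_k\le\delta_{\|i-k\|}\,(y_i-x_i).$$ In particular, $x<y$ implies $x\ll y$.
   Context: Notation: $\|i\|=\sum_{k=1}^d|i_k|$, $B_j^r=\{k:\|k-j\|\le r\}$, $(\tau_{k,l}x)_i=x_{i+k}+l$. Local potentials $S_j:\mathbb{R}^{\mathbb{Z}^d}\to\mathbb{R}$, $j\in\mathbb{Z}^d$, satisfy: (A) there is $r\in(0,\infty)$ and $C^2$ functions $s_j:\mathbb{R}^{B_j^r}\to\mathbb{R}$ with $S_j(x)=s_j(x|_{B_j^r})$; (B) $S_j(\tau_{k,l}x)=S_{j+k}(x)$; (C) each $S_j$ is bounded below and $S_j(x)\to\infty$ as $|x_k-x_j|\to\infty$ whenever $\|k-j\|=1$; (D) $\partial_{i,k}S_j\le0$ for $i\ne k$, and $\partial_{i,k}S_i<0$ when $\|i-k\|=1$; (E) $|\partial_{i,k}S_j|\le C$ uniformly. Order: $x\le y$ iff $x_i\le y_i$ for all $i$; $x<y$ iff $x\le y$, $x\ne y$; $x\ll y$ iff $x_i<y_i$ for all $i$. Birkhoff: for every $(k,l)$, $\tau_{k,l}x\ge x$ or $\tau_{k,l}x\le x$. Rotation vector $\omega$: $\lim_n x_{ni}/n=\langle\omega,i\rangle$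 for all $i$. A configuration $x$ is stationary if $\sum_{\|j-i\|\le r}\partial_iS_j(x)=0$ for all $i\in\mathbb{Z}^d$. *)

theory Defs
  imports "HOL-Analysis.Analysis"
begin

type_synonym ('d) config = "(int ^ ('d::finite)) \<Rightarrow> real"

definition l1norm :: "int ^ ('d::finite) \<Rightarrow> nat" where
  "l1norm i = (\<Sum>m\<in>UNIV. nat \<bar>i $ m\<bar>)"

definition ball1 :: "int ^ ('d::finite) \<Rightarrow> real \<Rightarrow> (int ^ ('d::finite)) set" where
  "ball1 j r = {k. real (l1norm (k - j)) \<le> r}"

definition shift :: "int ^ ('d::finite) \<Rightarrow> int \<Rightarrow> ('d::finite) config \<Rightarrow> ('d::finite) config" where
  "shift k l x = (\<lambda>i. x (i + k) + real_of_int l)"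

definition pdiff :: "int ^ ('d::finite) \<Rightarrow> (('d::finite) config \<Rightarrow> real) \<Rightarrow> ('d::finite) config \<Rightarrow> real" where
  "pdiff i F x = deriv (\<lambda>t. F (x(i := t))) (x i)"

definition pdiff_exists :: "int ^ ('d::finite) \<Rightarrow> (('d::finite) config \<Rightarrow> real) \<Rightarrow> bool" where
  "pdiff_exists i F \<longleftrightarrow> (\<forall>x. (\<lambda>t. F (x(i := t))) differentiable (at (x i)))"

definition depends_only_on :: "(('d::finite) config \<Rightarrow> real) \<Rightarrow> (int ^ ('d::finite)) set \<Rightarrow> bool" where
  "depends_only_on F B \<longleftrightarrow> (\<forall>x y. (\<forall>k\<in>B. x k = y k) \<longrightarrow> F x = F y)"

(* C^2 for a function of finitely many real variables: all partial derivatives of order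
   \<le> 2 exist and are continuous (product topology on configurations) *)
definition C2_local :: "(('d::finite) config \<Rightarrow> real) \<Rightarrow> bool" where
  "C2_local F \<longleftrightarrow> continuous_on UNIV F \<and>
     (\<forall>i. pdiff_exists i F \<and> continuous_on UNIV (pdiff i F) \<and>
        (\<forall>k. pdiff_exists k (pdiff i F) \<and> continuous_on UNIV (pdiff k (pdiff i F))))"

definition local_potentials ::
  "real \<Rightarrow> (int ^ ('d::finite) \<Rightarrow> ('d::finite) config \<Rightarrow> real) \<Rightarrow> bool" where
  "local_potentials r S \<longleftrightarrow>
     \<comment> \<open>(A)\<close>
     0 < r \<and>
     (\<forall>j. depends_only_on (S j) (ball1 j r) \<and> C2_local (S j)) \<and>
     \<comment> \<open>(B)\<close>
     (\<forall>j k l x. S j (shift k l x) = S (j + k) x) \<and>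
     \<comment> \<open>(C)\<close>
     (\<forall>j. bdd_below (range (S j))) \<and>
     (\<forall>j k. l1norm (k - j) = 1 \<longrightarrow>
        (\<forall>M. \<exists>R. \<forall>x. \<bar>x k - x j\<bar> \<ge> R \<longrightarrow> S j x \<ge> M)) \<and>
     \<comment> \<open>(D)\<close>
     (\<forall>i k j x. i \<noteq> k \<longrightarrow> pdiff k (pdiff i (S j)) x \<le> 0) \<and>
     (\<forall>i k x. l1norm (i - k) = 1 \<longrightarrow> pdiff k (pdiff i (S i)) x < 0) \<and>
     \<comment> \<open>(E)\<close>
     (\<exists>C. \<forall>i k j x. \<bar>pdiff k (pdiff i (S j)) x\<bar> \<le> C)"

(* order relations on configurations: \<le> and < are the pointwise library orders on functions;
   x \<ll> y: *)
definition strictly_below :: "('d::finite) config \<Rightarrow> ('d::finite) config \<Rightarrow> bool" where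
  "strictly_below x y \<longleftrightarrow> (\<forall>i. x i < y i)"

definition birkhoff :: "('d::finite) config \<Rightarrow> bool" where
  "birkhoff x \<longleftrightarrow> (\<forall>k l. shift k l x \<ge> x \<or> shift k l x \<le> x)"

definition has_rotation_vector :: "('d::finite) config \<Rightarrow> real ^ ('d::finite) \<Rightarrow> bool" where
  "has_rotation_vector x \<omega> \<longleftrightarrow>
     (\<forall>i. (\<lambda>n::nat. x (of_nat n * i) / real n) \<longlonglongrightarrow>
            (\<Sum>m\<in>UNIV. \<omega> $ m * real_of_int (i $ m)))"

definition stationary :: "real \<Rightarrow> (int ^ ('d::finite) \<Rightarrow> ('d::finite) config \<Rightarrow> real) \<Rightarrow> ('d::finite) config \<Rightarrow> bool" where
  "stationary r S x \<longleftrightarrow> (\<forall>i. (\<Sum>j\<in>ball1 i r. pdiff i (S j) x) = 0)"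

end

theory Submission
  imports Defs
begin

text \<open>
  Proof idea.  Let \<open>x \<le> y\<close> be stationary Birkhoff configurations with rotation vectors in the
  compact set \<open>K\<close> and put \<open>v = y - x \<ge> 0\<close>.

  (1) A Birkhoff configuration with rotation vector \<open>\<omega>\<close> satisfies
      \<open>|x (i + k) - x i - \<langle>\<omega>, k\<rangle>| \<le> 1\<close>; since \<open>K\<close> is bounded, the oscillation of \<open>x\<close>
      on every ball \<open>B\<^sub>i\<^sup>r\<close> is bounded by a constant \<open>D\<close> depending only on \<open>K\<close> and \<open>r\<close>.
  (2) By the \<open>C\<^sup>2\<close> regularity in (A), translation invariance (B) and compactness, the
      strict twist condition (D) holds uniformly: \<open>\<partial>\<^sub>i\<^sub>,\<^sub>k S\<^sub>i \<le> -\<epsilon>\<close> for neighbours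
      \<open>i, k\<close> on configurations of oscillation at most \<open>D + 1\<close>.
  (3) Subtracting the stationarity equations of \<open>x\<close> and \<open>y\<close> at a site \<open>i\<close> and walking from
      \<open>x\<close> to \<open>y\<close> along the segment in small steps (mean value theorem in finitely many
      coordinates, (D) and (E)) gives \<open>\<epsilon> v\<^sub>k \<le> |B\<^sup>r| C v\<^sub>i\<close> for every neighbour \<open>k\<close> of \<open>i\<close>.
  (4) Iterating along a lattice path yields \<open>v\<^sub>k \<le> \<lambda>\<^bsup>\<parallel>i - k\<parallel>\<^esup> v\<^sub>i\<close>, which also forces
      \<open>v \<gg> 0\<close> as soon as \<open>v \<noteq> 0\<close>.
\<close>


subsection \<open>Partial derivatives of functions of configurations\<close>

lemma deriv_translate:
  fixes g :: "real \<Rightarrow> real"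
  shows "deriv (\<lambda>t. g (t - c)) (u + c) = deriv g u"
proof -
  have "\<And>D. ((\<lambda>t. g (t - c)) has_field_derivative D) (at (u + c)) \<longleftrightarrow>
             (g has_field_derivative D) (at u)"
    by (subst DERIV_shift) simp
  then show ?thesis unfolding deriv_def by simp
qed

lemma pdiff_shift:
  assumes "\<And>x. G (shift a l x) = H x"
  shows "pdiff i G (shift a l x) = pdiff (i + a) H x"
proof -
  have upd: "(shift a l x)(i := t) = shift a l (x(i + a := t - real_of_int l))" for t
    by (auto simp: shift_def fun_eq_iff)
  have "pdiff i G (shift a l x) =
        deriv (\<lambda>t. H (x(i + a := t - real_of_int l))) (x (i + a) + real_of_int l)"
    unfolding pdiff_def upd assms by (simp add: shift_def)
  also have "\<dots> = deriv (\<lambda>t. H (x(i + a := t))) (x (i + a))"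
    by (rule deriv_translate)
  finally show ?thesis unfolding pdiff_def .
qed

lemma pdiff_outside:
  assumes "depends_only_on F B" "i \<notin> B"
  shows "pdiff i F x = 0"
proof -
  have "(\<lambda>t. F (x(i := t))) = (\<lambda>t. F x)"
    using assms unfolding depends_only_on_def by (intro ext) auto
  then show ?thesis unfolding pdiff_def by (simp add: DERIV_imp_deriv[OF DERIV_const])
qed

lemma pdiff_depends:
  fixes F :: "'d::finite config \<Rightarrow> real"
  assumes "depends_only_on F B"
  shows "depends_only_on (pdiff i F) B"
  unfolding depends_only_on_def
proof (intro allI impI)
  fix x y :: "'d config" assume xy: "\<forall>k\<in>B. x k = y k"
  show "pdiff i F x = pdiff i F y"
  proof (cases "i \<in> B")
    case True
    have "(\<lambda>t. F (x(i := t))) = (\<lambda>t. F (y(i := t)))"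
      using assms xy unfolding depends_only_on_def by (intro ext) (metis fun_upd_apply)
    then show ?thesis unfolding pdiff_def using True xy by simp
  next
    case False
    then show ?thesis using pdiff_outside[OF assms] by simp
  qed
qed

lemma mvt_coordinate:
  assumes "pdiff_exists k F"
  shows "\<exists>\<xi>. min a b \<le> \<xi> \<and> \<xi> \<le> max a b \<and>
     F (p(k := b)) - F (p(k := a)) = (b - a) * pdiff k F (p(k := \<xi>))"
proof -
  define f where "f t = F (p(k := t))" for t
  have D: "DERIV f t :> pdiff k F (p(k := t))" for t
  proof -
    have "(\<lambda>s. F ((p(k := t))(k := s))) differentiable (at ((p(k := t)) k))"
      using assms unfolding pdiff_exists_def by blast
    then have "DERIV f t :> deriv f t"
      by (simp add: f_def[abs_def] DERIV_deriv_iff_real_differentiable)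
    moreover have "deriv f t = pdiff k F (p(k := t))"
      unfolding pdiff_def f_def[abs_def] by simp
    ultimately show ?thesis by simp
  qed
  consider "a < b" | "a = b" | "b < a" by linarith
  then show ?thesis
  proof cases
    case 1
    from MVT2[OF 1, of f "\<lambda>t. pdiff k F (p(k := t))"] D obtain z where
      "a < z" "z < b" "f b - f a = (b - a) * pdiff k F (p(k := z))" by blast
    then show ?thesis by (intro exI[of _ z]) (auto simp: f_def)
  next
    case 2 then show ?thesis by (intro exI[of _ a]) auto
  next
    case 3
    from MVT2[OF 3, of f "\<lambda>t. pdiff k F (p(k := t))"] D obtain z where
      "b < z" "z < a" "f a - f b = (a - b) * pdiff k F (p(k := z))" by blast
    then show ?thesis by (intro exI[of _ z]) (auto simp: f_def algebra_simps)
  qed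
qed

definition in_box :: "'d config \<Rightarrow> 'd config \<Rightarrow> 'd config \<Rightarrow> bool" where
  "in_box p q z \<longleftrightarrow> (\<forall>m. min (p m) (q m) \<le> z m \<and> z m \<le> max (p m) (q m))"

lemma mvt_finite_support:
  assumes "finite A" "\<And>k. pdiff_exists k F" "\<And>m. m \<notin> A \<Longrightarrow> p m = q m"
  shows "\<exists>c. F q - F p = (\<Sum>k\<in>A. (q k - p k) * c k) \<and>
             (\<forall>k\<in>A. \<exists>z. in_box p q z \<and> c k = pdiff k F z)"
  using assms(1,3)
proof (induction A arbitrary: p)
  case empty
  then have "p = q" by auto
  then show ?case by auto
next
  case (insert b A)
  define p' where "p' = p(b := q b)"
  have "\<And>m. m \<notin> A \<Longrightarrow> p' m = q m" using insert.prems by (auto simp: p'_def)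
  from insert.IH[OF this] obtain c where c: "F q - F p' = (\<Sum>k\<in>A. (q k - p' k) * c k)"
    "\<forall>k\<in>A. \<exists>z. in_box p' q z \<and> c k = pdiff k F z"
    by blast
  from mvt_coordinate[OF assms(2)[of b], of "p b" "q b" p] obtain \<xi> where xi:
    "min (p b) (q b) \<le> \<xi>" "\<xi> \<le> max (p b) (q b)"
    "F (p(b := q b)) - F (p(b := p b)) = (q b - p b) * pdiff b F (p(b := \<xi>))" by blast
  define c' where "c' = c(b := pdiff b F (p(b := \<xi>)))"
  have "(\<Sum>k\<in>A. (q k - p' k) * c k) = (\<Sum>k\<in>A. (q k - p k) * c' k)"
    using insert.hyps by (intro sum.cong) (auto simp: p'_def c'_def)
  then have sum_eq: "F q - F p = (\<Sum>k\<in>insert b A. (q k - p k) * c' k)"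
    using c(1) xi(3) insert.hyps by (simp add: p'_def c'_def)
  have "in_box p q z" if "in_box p' q z" for z
  proof -
    have "min (p m) (q m) \<le> z m \<and> z m \<le> max (p m) (q m)" for m
      using that[unfolded in_box_def, rule_format, of m] unfolding p'_def
      by (cases "m = b") auto
    then show ?thesis unfolding in_box_def by blast
  qed
  moreover have "in_box p q (p(b := \<xi>))"
    using xi(1,2) unfolding in_box_def by auto
  ultimately have "\<forall>k\<in>insert b A. \<exists>z. in_box p q z \<and> c' k = pdiff k F z"
    using c(2) insert.hyps unfolding c'_def by (auto 5 2)
  with sum_eq show ?case by blast
qed

subsection \<open>The \<open>\<ell>\<^sup>1\<close> geometry of the lattice\<close>

lemma l1norm_real: "real (l1norm d) = (\<Sum>m\<in>UNIV. \<bar>real_of_int (d $ m)\<bar>)"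
  unfolding l1norm_def by (simp add: of_nat_sum)

lemma l1norm_minus: "l1norm (- d) = l1norm d"
  unfolding l1norm_def by simp

lemma l1norm_eq_0_iff: "l1norm d = 0 \<longleftrightarrow> d = 0"
  unfolding l1norm_def by (auto simp: vec_eq_iff)

lemma component_le_l1norm: "nat \<bar>d $ m\<bar> \<le> l1norm d"
  unfolding l1norm_def by (rule member_le_sum) auto

text \<open>Every lattice vector of norm \<open>n + 1\<close> is a unit vector plus a vector of norm \<open>n\<close>;
  this lets us walk from \<open>i\<close> to \<open>k\<close> in \<open>\<parallel>i - k\<parallel>\<close> nearest-neighbour steps.\<close>

lemma l1norm_Suc_split:
  assumes "l1norm d = Suc n"
  shows "\<exists>e. l1norm e = 1 \<and> l1norm (d - e) = n"
proof -
  have "d \<noteq> 0" using assms l1norm_eq_0_iff by force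
  then obtain m where m: "d $ m \<noteq> 0" by (auto simp: vec_eq_iff)
  define e :: "int ^ 'a" where "e = (\<chi> j. if j = m then sgn (d $ m) else 0)"
  have "l1norm e = (\<Sum>j\<in>UNIV. if j = m then 1 else 0)"
    unfolding l1norm_def e_def using m by (intro sum.cong) (auto simp: abs_sgn)
  then have e1: "l1norm e = 1" by simp
  have "nat \<bar>d $ j\<bar> = nat \<bar>(d - e) $ j\<bar> + (if j = m then 1 else 0)" for j
    using m by (cases "d $ m > 0") (auto simp: e_def)
  then have "l1norm d = (\<Sum>j\<in>UNIV. nat \<bar>(d - e) $ j\<bar> + (if j = m then 1 else 0))"
    unfolding l1norm_def by (intro sum.cong) auto
  also have "\<dots> = l1norm (d - e) + 1" unfolding l1norm_def by (simp add: sum.distrib)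
  finally show ?thesis using e1 assms by auto
qed

lemma finite_lattice_box: "finite {k :: int ^ 'd::finite. \<forall>m. k $ m \<in> {lo m..hi m}}"
proof -
  have "{k :: int ^ 'd. \<forall>m. k $ m \<in> {lo m..hi m}} = vec_nth -` (PiE UNIV (\<lambda>m. {lo m..hi m}))"
    by (auto simp: PiE_iff)
  moreover have "finite (vec_nth -` (PiE UNIV (\<lambda>m. {lo m..hi m})))"
    by (intro finite_vimageI finite_PiE) (auto simp: inj_def vec_eq_iff)
  ultimately show ?thesis by simp
qed

lemma finite_ball1: "finite (ball1 j r)"
proof -
  have "ball1 j r \<subseteq> {k. \<forall>m. k $ m \<in> {j $ m - \<lceil>r\<rceil> .. j $ m + \<lceil>r\<rceil>}}"
  proof (clarify)
    fix k m assume "k \<in> ball1 j r"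
    then have "real (l1norm (k - j)) \<le> r" by (simp add: ball1_def)
    moreover have "nat \<bar>(k - j) $ m\<bar> \<le> l1norm (k - j)" by (rule component_le_l1norm)
    ultimately have "real_of_int \<bar>(k - j) $ m\<bar> \<le> real_of_int \<lceil>r\<rceil>"
      using le_of_int_ceiling[of r] by linarith
    then have "\<bar>k $ m - j $ m\<bar> \<le> \<lceil>r\<rceil>" by simp
    then show "k $ m \<in> {j $ m - \<lceil>r\<rceil> .. j $ m + \<lceil>r\<rceil>}" by auto
  qed
  then show ?thesis by (rule finite_subset[OF _ finite_lattice_box])
qed

lemma card_ball1: "card (ball1 (i :: int ^ 'd::finite) r) = card (ball1 (0 :: int ^ 'd) r)"
proof -
  have "ball1 i r = (\<lambda>m. m + i) ` ball1 0 r"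
    unfolding ball1_def by (auto simp: image_iff intro!: exI[of _ "_ - i"])
  moreover have "inj_on (\<lambda>m. m + i) (ball1 0 r)" by (rule inj_onI) simp
  ultimately show ?thesis by (simp add: card_image)
qed

lemma center_in_ball1: "0 \<le> r \<Longrightarrow> i \<in> ball1 i r"
  unfolding ball1_def by (simp add: l1norm_def)


subsection \<open>Birkhoff configurations stay close to their linear part\<close>

definition pairing :: "real ^ 'd::finite \<Rightarrow> int ^ 'd \<Rightarrow> real" where
  "pairing \<omega> k = (\<Sum>m\<in>UNIV. \<omega> $ m * real_of_int (k $ m))"

text \<open>For a Birkhoff configuration all increments \<open>x (i + k) - x i\<close> with the same \<open>k\<close>
  lie in an interval of length \<open>1\<close>: otherwise some \<open>\<tau>\<^sub>k\<^sub>,\<^sub>l x\<close> would cross \<open>x\<close>.\<close>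

lemma birkhoff_increments_close:
  assumes "birkhoff x"
  shows "x (i + k) - x i - (x (i' + k) - x i') \<le> 1"
proof (rule ccontr)
  assume far: "\<not> ?thesis"
  define l where "l = \<lfloor>x i - x (i + k)\<rfloor> + 1"
  have l_above: "real_of_int l > x i - x (i + k)" unfolding l_def by linarith
  have l_below: "real_of_int l < x i' - x (i' + k)" using far unfolding l_def by linarith
  from assms[unfolded birkhoff_def, rule_format, of k l] show False
  proof
    assume "shift k l x \<ge> x"
    then have "x i' \<le> shift k l x i'" by (simp add: le_fun_def)
    then show False using l_below by (simp add: shift_def)
  next
    assume "shift k l x \<le> x"
    then have "shift k l x i \<le> x i" by (simp add: le_fun_def)
    then show False using l_above by (simp add: shift_def)
  qed
qed

lemma pairing_le_increment_bound:
  assumes "has_rotation_vector x \<omega>" "\<And>i. x (i + k) - x i \<le> b"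
  shows "pairing \<omega> k \<le> b"
proof -
  have telescoped: "x (of_nat n * k) - x 0 \<le> real n * b" for n
  proof (induction n)
    case 0 then show ?case by simp
  next
    case (Suc n)
    have "x (of_nat (Suc n) * k) = x (of_nat n * k + k)" by (simp add: algebra_simps)
    moreover have "x (of_nat n * k + k) - x (of_nat n * k) \<le> b" by (rule assms(2))
    ultimately show ?case using Suc by (simp add: algebra_simps)
  qed
  have "(\<lambda>n::nat. x (of_nat n * k) / real n) \<longlonglongrightarrow> pairing \<omega> k"
    using assms(1) unfolding has_rotation_vector_def pairing_def by blast
  moreover have "(\<lambda>n::nat. x 0 / real n + b) \<longlonglongrightarrow> 0 + b"
    by (intro tendsto_add tendsto_const lim_const_over_n)
  moreover have "\<forall>n\<ge>1. x (of_nat n * k) / real n \<le> x 0 / real n + b"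
    using telescoped by (simp add: field_simps)
  ultimately have "pairing \<omega> k \<le> 0 + b" by (blast intro: LIMSEQ_le)
  then show ?thesis by simp
qed

lemma has_rotation_vector_uminus:
  fixes x :: "'d::finite config"
  assumes "has_rotation_vector x \<omega>"
  shows "has_rotation_vector (\<lambda>i. - x i) (- \<omega>)"
  unfolding has_rotation_vector_def
proof
  fix i :: "int ^ 'd"
  have "(\<lambda>n::nat. - (x (of_nat n * i) / real n)) \<longlonglongrightarrow> - (\<Sum>m\<in>UNIV. \<omega> $ m * real_of_int (i $ m))"
    using assms unfolding has_rotation_vector_def by (intro tendsto_minus) blast
  then show "(\<lambda>n::nat. - x (of_nat n * i) / real n) \<longlonglongrightarrow> (\<Sum>m\<in>UNIV. (- \<omega>) $ m * real_of_int (i $ m))"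
    by (simp add: sum_negf)
qed

lemma birkhoff_near_linear:
  assumes "birkhoff x" "has_rotation_vector x \<omega>"
  shows "\<bar>x (i + k) - x i - pairing \<omega> k\<bar> \<le> 1"
proof -
  have "pairing \<omega> k \<le> x (i + k) - x i + 1"
  proof (rule pairing_le_increment_bound[OF assms(2)])
    show "x (j + k) - x j \<le> x (i + k) - x i + 1" for j
      using birkhoff_increments_close[OF assms(1), of j k i] by simp
  qed
  moreover have "pairing (- \<omega>) k \<le> - (x (i + k) - x i) + 1"
  proof (rule pairing_le_increment_bound[OF has_rotation_vector_uminus[OF assms(2)]])
    show "- x (j + k) - - x j \<le> - (x (i + k) - x i) + 1" for j
      using birkhoff_increments_close[OF assms(1), of i k j] by simp
  qed
  moreover have "pairing (- \<omega>) k = - pairing \<omega> k"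
    unfolding pairing_def by (simp add: sum_negf)
  ultimately show ?thesis by linarith
qed

lemma pairing_bound:
  assumes "\<And>m. \<bar>\<omega> $ m\<bar> \<le> B"
  shows "\<bar>pairing \<omega> k\<bar> \<le> B * real (l1norm k)"
proof -
  have "\<bar>pairing \<omega> k\<bar> \<le> (\<Sum>m\<in>UNIV. \<bar>\<omega> $ m\<bar> * \<bar>real_of_int (k $ m)\<bar>)"
    unfolding pairing_def abs_mult[symmetric] by (rule sum_abs)
  also have "\<dots> \<le> (\<Sum>m\<in>UNIV. B * \<bar>real_of_int (k $ m)\<bar>)"
    by (intro sum_mono mult_right_mono assms) simp
  also have "\<dots> = B * real (l1norm k)"
    by (simp only: l1norm_real sum_distrib_left)
  finally show ?thesis .
qed

lemma birkhoff_oscillation_bound: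
  fixes K :: "(real ^ 'd::finite) set"
  assumes "compact K" "0 \<le> r"
  shows "\<exists>D\<ge>0. \<forall>(x :: 'd config) \<omega> i m. birkhoff x \<and> has_rotation_vector x \<omega> \<and> \<omega> \<in> K \<and>
             m \<in> ball1 i r \<longrightarrow> \<bar>x m - x i\<bar> \<le> D"
proof -
  obtain B0 where B0: "\<forall>\<omega>\<in>K. norm \<omega> \<le> B0"
    using compact_imp_bounded[OF assms(1)] unfolding bounded_iff by blast
  define B where "B = max B0 0"
  have B_comp: "\<bar>\<omega> $ m\<bar> \<le> B" if "\<omega> \<in> K" for \<omega> m
    using component_le_norm_cart[of \<omega> m] B0 that unfolding B_def by fastforce
  show ?thesis
  proof (intro exI[of _ "B * r + 1"] conjI allI impI)
    show "0 \<le> B * r + 1" using assms(2) unfolding B_def by simp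
  next
    fix x :: "'d config" and \<omega> :: "real ^ 'd" and i m :: "int ^ 'd"
    assume H: "birkhoff x \<and> has_rotation_vector x \<omega> \<and> \<omega> \<in> K \<and> m \<in> ball1 i r"
    have "\<bar>x (i + (m - i)) - x i - pairing \<omega> (m - i)\<bar> \<le> 1"
      using H by (intro birkhoff_near_linear) auto
    moreover have "\<bar>pairing \<omega> (m - i)\<bar> \<le> B * real (l1norm (m - i))"
      using H B_comp by (intro pairing_bound) auto
    moreover have "B * real (l1norm (m - i)) \<le> B * r"
      using H unfolding ball1_def B_def by (intro mult_left_mono) auto
    ultimately show "\<bar>x m - x i\<bar> \<le> B * r + 1" by (simp add: abs_le_iff)
  qed
qed

context
  fixes r :: real and S :: "int ^ 'd::finite \<Rightarrow> 'd config \<Rightarrow> real"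
  assumes LP: "local_potentials r S"
begin

lemma potential_radius_pos: "0 < r"
  using LP unfolding local_potentials_def by auto

lemma potential_local: "depends_only_on (S j) (ball1 j r)"
  using LP unfolding local_potentials_def by auto

lemma potential_C2: "C2_local (S j)"
  using LP unfolding local_potentials_def by auto

lemma potential_translation: "S j (shift k l x) = S (j + k) x"
  using LP unfolding local_potentials_def by auto

lemma potential_mixed_nonpos: "i \<noteq> k \<Longrightarrow> pdiff k (pdiff i (S j)) x \<le> 0"
  using LP unfolding local_potentials_def by auto

lemma potential_twist: "l1norm (i - k) = 1 \<Longrightarrow> pdiff k (pdiff i (S i)) x < 0"
  using LP unfolding local_potentials_def by auto

lemma potential_second_bounded: "\<exists>C. \<forall>i k j x. \<bar>pdiff k (pdiff i (S j)) x\<bar> \<le> C"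
  using LP unfolding local_potentials_def by auto

text \<open>Nearest neighbours of \<open>i\<close> lie in the interaction ball \<open>B\<^sub>i\<^sup>r\<close>, since \<open>S\<^sub>i\<close> does
  depend on them by the twist condition.\<close>

lemma neighbour_in_ball:
  fixes i k :: "int ^ 'd"
  assumes "l1norm (i - k) = 1"
  shows "k \<in> ball1 i r"
proof (rule ccontr)
  assume "k \<notin> ball1 i r"
  then have "pdiff k (pdiff i (S i)) (\<lambda>_. 0) = 0"
    by (rule pdiff_outside[OF pdiff_depends[OF potential_local]])
  with potential_twist[OF assms, of "\<lambda>_. 0"] show False by simp
qed

end


subsection \<open>The uniform twist condition\<close>

lemma finite_family_uniformly_negative:
  assumes "finite E" "\<forall>e\<in>E. \<exists>\<epsilon>>0. \<forall>w\<in>Q. G e w \<le> - \<epsilon>"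
  shows "\<exists>\<epsilon>>0. \<forall>e\<in>E. \<forall>w\<in>Q. G e w \<le> - (\<epsilon> :: real)"
  using assms
proof (induction E rule: finite_induct)
  case empty
  show ?case by (intro exI[of _ 1]) simp
next
  case (insert a E)
  then obtain \<epsilon>1 where "\<epsilon>1 > 0" "\<forall>e\<in>E. \<forall>w\<in>Q. G e w \<le> - \<epsilon>1" by auto
  moreover from insert.prems obtain \<epsilon>2 where "\<epsilon>2 > 0" "\<forall>w\<in>Q. G a w \<le> - \<epsilon>2" by auto
  ultimately show ?case by (intro exI[of _ "min \<epsilon>1 \<epsilon>2"]) force
qed

lemma compact_config_box:
  "compact (PiE UNIV (\<lambda>m. if m \<in> B then {-R..R} else {0}) :: 'd::finite config set)"
proof -
  have "compactin (product_topology (\<lambda>i. euclidean) UNIV)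
          (PiE UNIV (\<lambda>m. if m \<in> B then {-R..R::real} else {0}) :: 'd config set)"
    by (subst compactin_PiE) auto
  then show ?thesis by (simp add: euclidean_product_topology)
qed

text \<open>By translation invariance every mixed derivative \<open>\<partial>\<^sub>i\<^sub>,\<^sub>k S\<^sub>i\<close> is one of finitely many
  derivatives of \<open>S\<^sub>0\<close>, evaluated at a translate of the configuration.\<close>

lemma pdiff2_translate:
  assumes "\<And>j k l x. S j (shift k l x) = S (j + k) x"
  shows "pdiff k (pdiff i (S i)) z = pdiff (k - i) (pdiff 0 (S 0)) (shift i l z)"
proof -
  have "\<And>a x. pdiff a (S 0) (shift i l x) = pdiff (a + i) (S (0 + i)) x"
    by (rule pdiff_shift) (rule assms)
  then have "pdiff (k - i) (pdiff 0 (S 0)) (shift i l z) =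
             pdiff (k - i + i) (pdiff (0 + i) (S (0 + i))) z"
    by (rule pdiff_shift)
  then show ?thesis by simp
qed

text \<open>On the compact set of configurations supported in \<open>B\<^sub>0\<^sup>r\<close> with values in \<open>[-R, R]\<close>,
  the finitely many continuous functions \<open>\<partial>\<^sub>0\<^sub>,\<^sub>e S\<^sub>0\<close>, \<open>\<parallel>e\<parallel> = 1\<close>, attain a negative maximum.\<close>

lemma twist_on_config_box:
  fixes S :: "int ^ 'd::finite \<Rightarrow> 'd config \<Rightarrow> real"
  assumes LP: "local_potentials r S" and "0 \<le> R"
  defines "Q \<equiv> PiE UNIV (\<lambda>m. if m \<in> ball1 0 r then {-R..R} else {0})"
  shows "\<exists>\<epsilon>>0. \<forall>e. l1norm (- e) = 1 \<longrightarrow> (\<forall>w\<in>Q. pdiff e (pdiff 0 (S 0)) w \<le> - \<epsilon>)"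
proof -
  define G where "G e = pdiff e (pdiff 0 (S 0))" for e
  have "\<exists>\<epsilon>>0. \<forall>w\<in>Q. G e w \<le> - \<epsilon>" if e: "l1norm (- e) = 1" for e
  proof -
    have "continuous_on Q (G e)"
      using potential_C2[OF LP, of 0] unfolding C2_local_def G_def
      by (blast intro: continuous_on_subset)
    moreover have "(\<lambda>_. 0) \<in> Q" using \<open>0 \<le> R\<close> unfolding Q_def by (simp add: PiE_iff)
    then have "Q \<noteq> {}" by blast
    moreover have "compact Q" unfolding Q_def by (rule compact_config_box)
    ultimately obtain s where s: "s \<in> Q" "\<forall>t\<in>Q. G e t \<le> G e s"
      using continuous_attains_sup by blast
    have "G e s < 0" using potential_twist[OF LP, of 0 e] e unfolding G_def by simp
    then show ?thesis using s(2) by (intro exI[of _ "- G e s"]) auto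
  qed
  moreover have "finite {e :: int ^ 'd. l1norm (- e) = 1}"
    by (rule finite_subset[OF _ finite_ball1[of 0 1]]) (auto simp: ball1_def l1norm_minus)
  ultimately obtain \<epsilon> where "\<epsilon> > 0" "\<forall>e\<in>{e. l1norm (- e) = 1}. \<forall>w\<in>Q. G e w \<le> - \<epsilon>"
    using finite_family_uniformly_negative[of "{e. l1norm (- e) = 1}" Q G] by blast
  then show ?thesis unfolding G_def by auto
qed

text \<open>Translating by \<open>i\<close> and by the integer part of \<open>z\<^sub>i\<close> moves any configuration of
  oscillation at most \<open>D\<close> on \<open>B\<^sub>i\<^sup>r\<close> into that box with \<open>R = D + 1\<close>; hence the strict
  twist condition (D) holds uniformly on such configurations.\<close>

lemma uniform_twist:
  fixes S :: "int ^ 'd::finite \<Rightarrow> 'd config \<Rightarrow> real"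
  assumes LP: "local_potentials r S" and "0 \<le> D"
  shows "\<exists>\<epsilon>>0. \<forall>i k z. l1norm (i - k) = 1 \<longrightarrow> (\<forall>m\<in>ball1 i r. \<bar>z m - z i\<bar> \<le> D) \<longrightarrow>
            pdiff k (pdiff i (S i)) z \<le> - \<epsilon>"
proof -
  define Q :: "'d config set"
    where "Q = PiE UNIV (\<lambda>m. if m \<in> ball1 0 r then {-(D+1)..D+1} else {0})"
  have "0 \<le> D + 1" using \<open>0 \<le> D\<close> by simp
  then obtain \<epsilon> where \<epsilon>: "\<epsilon> > 0"
    "\<forall>e. l1norm (- e) = 1 \<longrightarrow> (\<forall>w\<in>Q. pdiff e (pdiff 0 (S 0)) w \<le> - \<epsilon>)"
    using twist_on_config_box[OF LP] unfolding Q_def by blast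
  show ?thesis
  proof (intro exI[of _ \<epsilon>] conjI allI impI)
    fix i k :: "int ^ 'd" and z :: "'d config"
    assume ik: "l1norm (i - k) = 1" and osc: "\<forall>m\<in>ball1 i r. \<bar>z m - z i\<bar> \<le> D"
    define w where "w = shift i (- \<lfloor>z i\<rfloor>) z"
    define w' where "w' m = (if m \<in> ball1 0 r then w m else 0)" for m
    have "pdiff k (pdiff i (S i)) z = pdiff (k - i) (pdiff 0 (S 0)) w"
      unfolding w_def by (rule pdiff2_translate[OF potential_translation[OF LP]])
    also have "\<dots> = pdiff (k - i) (pdiff 0 (S 0)) w'"
      using pdiff_depends[OF pdiff_depends[OF potential_local[OF LP, of 0]]]
      unfolding depends_only_on_def w'_def by auto
    also have "\<dots> \<le> - \<epsilon>"
    proof -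
      have "w' m \<in> {-(D+1)..D+1}" if "m \<in> ball1 0 r" for m
      proof -
        have "m + i \<in> ball1 i r" using that by (simp add: ball1_def)
        then have "\<bar>z (m + i) - z i\<bar> \<le> D" using osc by blast
        moreover have "w' m = z (m + i) - real_of_int \<lfloor>z i\<rfloor>"
          using that by (simp add: w'_def w_def shift_def)
        ultimately show ?thesis by (auto simp: abs_le_iff) linarith+
      qed
      then have "w' \<in> Q" unfolding Q_def by (auto simp: PiE_iff w'_def)
      moreover have "l1norm (- (k - i)) = 1" using ik by simp
      ultimately show ?thesis using \<epsilon>(2) by blast
    qed
    finally show "pdiff k (pdiff i (S i)) z \<le> - \<epsilon>" .
  qed (use \<epsilon> in simp)
qed

subsection \<open>Comparing the stationarity equations of two ordered configurations\<close>

lemma mixed_partial_bound: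
  fixes S :: "int ^ 'd::finite \<Rightarrow> 'd config \<Rightarrow> real"
  assumes LP: "local_potentials r S"
    and C: "\<forall>i k j z. \<bar>pdiff k (pdiff i (S j)) z\<bar> \<le> C"
    and twist: "\<forall>i k z. l1norm (i - k) = 1 \<longrightarrow> (\<forall>m\<in>ball1 i r. \<bar>z m - z i\<bar> \<le> D + 1) \<longrightarrow>
                  pdiff k (pdiff i (S i)) z \<le> - \<epsilon>"
    and nb: "l1norm (i - k0) = 1"
    and osc: "k = k0 \<and> j = i \<Longrightarrow> \<forall>m\<in>ball1 i r. \<bar>z m - z i\<bar> \<le> D + 1"
  shows "pdiff k (pdiff i (S j)) z \<le> (if k = i then C else 0) - (if k = k0 \<and> j = i then \<epsilon> else 0)"
proof -
  have "k0 \<noteq> i" using nb by (auto simp: l1norm_def)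
  consider "k = i" | "k = k0 \<and> j = i" | "k \<noteq> i" "\<not> (k = k0 \<and> j = i)" by blast
  then show ?thesis
  proof cases
    case 1
    have "pdiff k (pdiff i (S j)) z \<le> C" using C abs_le_D1 by blast
    with 1 \<open>k0 \<noteq> i\<close> show ?thesis by simp
  next
    case 2
    have "pdiff k0 (pdiff i (S i)) z \<le> - \<epsilon>"
      using spec[OF spec[OF spec[OF twist, of i], of k0], of z] nb osc[OF 2] by simp
    with 2 \<open>k0 \<noteq> i\<close> show ?thesis by simp
  next
    case 3
    have "pdiff k (pdiff i (S j)) z \<le> 0" using potential_mixed_nonpos[OF LP, of i k] 3(1) by auto
    with 3 show ?thesis by auto
  qed
qed

lemma raised_oscillation:
  fixes p z :: "'d::finite config"
  assumes "\<And>m. m \<in> A \<Longrightarrow> p m \<le> z m \<and> z m \<le> p m + 1" "i \<in> A"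
    and "\<And>m. m \<in> A \<Longrightarrow> \<bar>p m - p i\<bar> \<le> D"
  shows "\<forall>m\<in>A. \<bar>z m - z i\<bar> \<le> D + 1"
proof
  fix m assume "m \<in> A"
  with assms show "\<bar>z m - z i\<bar> \<le> D + 1"
    using assms(1)[OF \<open>m \<in> A\<close>] assms(1)[OF assms(2)] assms(3)[OF \<open>m \<in> A\<close>]
    unfolding abs_le_iff by linarith
qed

text \<open>This is the mean value theorem on the finite set \<open>B\<^sub>j\<^sup>r\<close> combined with the sign
  information above; the intermediate points stay within distance \<open>1\<close> of \<open>p\<close>.\<close>

lemma twist_increment_bound:
  fixes S :: "int ^ 'd::finite \<Rightarrow> 'd config \<Rightarrow> real" and p q :: "'d config"
  assumes LP: "local_potentials r S"
    and C: "\<forall>i k j z. \<bar>pdiff k (pdiff i (S j)) z\<bar> \<le> C"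
    and twist: "\<forall>i k z. l1norm (i - k) = 1 \<longrightarrow> (\<forall>m\<in>ball1 i r. \<bar>z m - z i\<bar> \<le> D + 1) \<longrightarrow>
                  pdiff k (pdiff i (S i)) z \<le> - \<epsilon>"
    and nb: "l1norm (i - k0) = 1"
    and above: "\<And>m. p m \<le> q m" and close: "\<And>m. m \<in> ball1 i r \<Longrightarrow> q m \<le> p m + 1"
    and osc: "\<And>m. m \<in> ball1 i r \<Longrightarrow> \<bar>p m - p i\<bar> \<le> D"
  shows "pdiff i (S j) q - pdiff i (S j) p \<le>
           (q i - p i) * C - (if j = i then (q k0 - p k0) * \<epsilon> else 0)"
proof -
  define F where "F = pdiff i (S j)"
  define q' where "q' m = (if m \<in> ball1 j r then q m else p m)" for m
  have "F q' = F q"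
    using pdiff_depends[OF potential_local[OF LP]] unfolding F_def depends_only_on_def q'_def
    by auto
  moreover have "\<And>k. pdiff_exists k F"
    using potential_C2[OF LP, of j] unfolding C2_local_def F_def by blast
  ultimately obtain c where
    c_sum: "F q - F p = (\<Sum>k\<in>ball1 j r. (q k - p k) * c k)" and
    c_at: "\<forall>k\<in>ball1 j r. \<exists>z. in_box p q' z \<and> c k = pdiff k F z"
    using mvt_finite_support[OF finite_ball1[of j r], of F p q'] unfolding q'_def by auto
  have i_ball: "i \<in> ball1 i r" using potential_radius_pos[OF LP] by (simp add: center_in_ball1)
  have term_bound: "(q k - p k) * c k \<le>
      (if k = i then (q i - p i) * C else 0) - (if k = k0 \<and> j = i then (q k0 - p k0) * \<epsilon> else 0)"
    if k: "k \<in> ball1 j r" for k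
  proof -
    obtain z where z: "in_box p q' z" and ck: "c k = pdiff k F z" using c_at k by blast
    have "\<forall>m\<in>ball1 i r. \<bar>z m - z i\<bar> \<le> D + 1" if "k = k0 \<and> j = i"
    proof -
      have "p m \<le> z m \<and> z m \<le> p m + 1" if "m \<in> ball1 i r" for m
        using z[unfolded in_box_def, rule_format, of m] above[of m] close[OF that]
          \<open>m \<in> ball1 i r\<close> \<open>k = k0 \<and> j = i\<close> unfolding q'_def by auto
      then show ?thesis using i_ball osc by (rule raised_oscillation[where p = p])
    qed
    then have "c k \<le> (if k = i then C else 0) - (if k = k0 \<and> j = i then \<epsilon> else 0)"
      unfolding ck F_def by (rule mixed_partial_bound[OF LP C twist nb])
    then have "(q k - p k) * c k \<le>
        (q k - p k) * ((if k = i then C else 0) - (if k = k0 \<and> j = i then \<epsilon> else 0))"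
      using above[of k] by (intro mult_left_mono) auto
    moreover have "(q k - p k) * (if k = i then C else 0) = (if k = i then (q i - p i) * C else 0)"
      by simp
    moreover have "(q k - p k) * (if k = k0 \<and> j = i then \<epsilon> else 0) =
                   (if k = k0 \<and> j = i then (q k0 - p k0) * \<epsilon> else 0)"
      by auto
    ultimately show ?thesis by (simp only: right_diff_distrib)
  qed
  have "F q - F p \<le> (\<Sum>k\<in>ball1 j r.
      (if k = i then (q i - p i) * C else 0) - (if k = k0 \<and> j = i then (q k0 - p k0) * \<epsilon> else 0))"
    unfolding c_sum by (intro sum_mono term_bound)
  also have "\<dots> = (if i \<in> ball1 j r then (q i - p i) * C else 0)
                 - (if j = i then (q k0 - p k0) * \<epsilon> else 0)"
  proof -
    have "(\<Sum>k\<in>ball1 j r. if k = k0 \<and> j = i then (q k0 - p k0) * \<epsilon> else 0) =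
          (if j = i then (q k0 - p k0) * \<epsilon> else 0)"
      using neighbour_in_ball[OF LP nb] by (cases "j = i") (simp_all add: finite_ball1)
    then show ?thesis by (simp add: sum_subtractf finite_ball1)
  qed
  also have "\<dots> \<le> (q i - p i) * C - (if j = i then (q k0 - p k0) * \<epsilon> else 0)"
  proof -
    have "0 \<le> C" using C by (meson abs_ge_zero order_trans)
    then show ?thesis using above[of i] by simp
  qed
  finally show ?thesis unfolding F_def .
qed

lemma convex_combination_abs_le:
  fixes a b t D :: real
  assumes "\<bar>a\<bar> \<le> D" "\<bar>b\<bar> \<le> D" "0 \<le> t" "t \<le> 1"
  shows "\<bar>(1 - t) * a + t * b\<bar> \<le> D"
proof -
  have "\<bar>(1 - t) * a + t * b\<bar> \<le> (1 - t) * \<bar>a\<bar> + t * \<bar>b\<bar>"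
    using abs_triangle_ineq[of "(1 - t) * a" "t * b"] assms(3,4) by (simp add: abs_mult)
  also have "\<dots> \<le> (1 - t) * D + t * D"
    using assms by (intro add_mono mult_left_mono) auto
  finally show ?thesis by (simp add: algebra_simps)
qed

lemma segment_oscillation:
  fixes x y :: "'d::finite config"
  assumes "\<bar>x m - x i\<bar> \<le> D" "\<bar>y m - y i\<bar> \<le> D" "0 \<le> t" "t \<le> 1"
  shows "\<bar>(x m + t * (y m - x m)) - (x i + t * (y i - x i))\<bar> \<le> D"
proof -
  have "(x m + t * (y m - x m)) - (x i + t * (y i - x i)) = (1 - t) * (x m - x i) + t * (y m - y i)"
    by (simp add: algebra_simps)
  then show ?thesis using convex_combination_abs_le[OF assms] by simp
qed

text \<open>Walking from \<open>x\<close> to \<open>y \<ge> x\<close> along the segment in \<open>N\<close> steps, each of size at most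
  \<open>1\<close> on \<open>B\<^sub>i\<^sup>r\<close>, keeps the oscillation bound of \<open>x\<close> and \<open>y\<close> (the segment is convex), so
  summing the one-step estimate gives the same estimate for \<open>x\<close> and \<open>y\<close> themselves.\<close>

lemma pdiff_difference_bound:
  fixes S :: "int ^ 'd::finite \<Rightarrow> 'd config \<Rightarrow> real" and x y :: "'d config"
  assumes LP: "local_potentials r S"
    and C: "\<forall>i k j z. \<bar>pdiff k (pdiff i (S j)) z\<bar> \<le> C"
    and twist: "\<forall>i k z. l1norm (i - k) = 1 \<longrightarrow> (\<forall>m\<in>ball1 i r. \<bar>z m - z i\<bar> \<le> D + 1) \<longrightarrow>
                  pdiff k (pdiff i (S i)) z \<le> - \<epsilon>"
    and nb: "l1norm (i - k0) = 1" and le: "x \<le> y"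
    and osc_x: "\<And>m. m \<in> ball1 i r \<Longrightarrow> \<bar>x m - x i\<bar> \<le> D"
    and osc_y: "\<And>m. m \<in> ball1 i r \<Longrightarrow> \<bar>y m - y i\<bar> \<le> D"
  shows "pdiff i (S j) y - pdiff i (S j) x \<le>
           (y i - x i) * C - (if j = i then (y k0 - x k0) * \<epsilon> else 0)"
proof -
  define F where "F = pdiff i (S j)"
  define v where "v m = y m - x m" for m
  define N :: nat where "N = nat \<lceil>\<Sum>m\<in>ball1 i r. v m\<rceil> + 1"
  define p where "p s m = x m + real s / real N * v m" for s m
  have N_pos: "real N > 0" unfolding N_def by simp
  have v_nonneg: "0 \<le> v m" for m using le unfolding v_def le_fun_def by simp
  have v_le_N: "v m \<le> real N" if "m \<in> ball1 i r" for m
  proof -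
    have "v m \<le> (\<Sum>m\<in>ball1 i r. v m)"
      using that v_nonneg by (intro member_le_sum finite_ball1) auto
    then show ?thesis unfolding N_def by linarith
  qed
  have increment: "p (Suc s) m = p s m + v m / real N" for s m
    unfolding p_def by (simp add: field_simps add_divide_distrib)
  have step: "F (p (Suc s)) - F (p s) \<le>
      v i / real N * C - (if j = i then v k0 / real N * \<epsilon> else 0)" if "s < N" for s
  proof -
    have "p s m \<le> p (Suc s) m" for m
      unfolding increment using v_nonneg N_pos by simp
    moreover have "p (Suc s) m \<le> p s m + 1" if "m \<in> ball1 i r" for m
      unfolding increment using v_le_N[OF that] N_pos by simp
    moreover have "\<bar>p s m - p s i\<bar> \<le> D" if "m \<in> ball1 i r" for m
      unfolding p_def v_def using osc_x[OF that] osc_y[OF that] \<open>s < N\<close>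
      by (intro segment_oscillation) auto
    ultimately have "F (p (Suc s)) - F (p s) \<le>
        (p (Suc s) i - p s i) * C - (if j = i then (p (Suc s) k0 - p s k0) * \<epsilon> else 0)"
      unfolding F_def by (rule twist_increment_bound[OF LP C twist nb])
    moreover have "p (Suc s) m - p s m = v m / real N" for m
      unfolding increment by simp
    ultimately show ?thesis by (simp only:)
  qed
  have "F y - F x = (\<Sum>s<N. F (p (Suc s)) - F (p s))"
  proof -
    have "p 0 = x" "p N = y" using N_pos unfolding p_def v_def by (auto simp: fun_eq_iff)
    then show ?thesis using sum_lessThan_telescope[of "\<lambda>s. F (p s)" N] by simp
  qed
  also have "\<dots> \<le> (\<Sum>s<N. v i / real N * C - (if j = i then v k0 / real N * \<epsilon> else 0))"
    by (intro sum_mono step) simp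
  also have "\<dots> = v i * C - (if j = i then v k0 * \<epsilon> else 0)"
    using N_pos by (simp add: field_simps)
  finally show ?thesis unfolding F_def v_def .
qed

text \<open>Subtracting the stationarity equations at \<open>i\<close>: the gain \<open>\<epsilon> (y\<^sub>k\<^sub>0 - x\<^sub>k\<^sub>0)\<close> from the twist
  at the neighbour \<open>k\<^sub>0\<close> is paid for by at most \<open>|B\<^sub>i\<^sup>r|\<close> terms \<open>C (y\<^sub>i - x\<^sub>i)\<close>.\<close>

lemma stationary_neighbour_estimate:
  fixes S :: "int ^ 'd::finite \<Rightarrow> 'd config \<Rightarrow> real" and x y :: "'d config"
  assumes LP: "local_potentials r S"
    and C: "\<forall>i k j z. \<bar>pdiff k (pdiff i (S j)) z\<bar> \<le> C"
    and twist: "\<forall>i k z. l1norm (i - k) = 1 \<longrightarrow> (\<forall>m\<in>ball1 i r. \<bar>z m - z i\<bar> \<le> D + 1) \<longrightarrow>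
                  pdiff k (pdiff i (S i)) z \<le> - \<epsilon>"
    and nb: "l1norm (i - k0) = 1" and le: "x \<le> y"
    and stat: "stationary r S x" "stationary r S y"
    and osc_x: "\<And>m. m \<in> ball1 i r \<Longrightarrow> \<bar>x m - x i\<bar> \<le> D"
    and osc_y: "\<And>m. m \<in> ball1 i r \<Longrightarrow> \<bar>y m - y i\<bar> \<le> D"
  shows "\<epsilon> * (y k0 - x k0) \<le> real (card (ball1 i r)) * C * (y i - x i)"
proof -
  have i_ball: "i \<in> ball1 i r"
    using potential_radius_pos[OF LP] by (simp add: center_in_ball1)
  have "0 = (\<Sum>j\<in>ball1 i r. pdiff i (S j) y - pdiff i (S j) x)"
    using stat unfolding stationary_def by (simp add: sum_subtractf)
  also have "\<dots> \<le> (\<Sum>j\<in>ball1 i r. (y i - x i) * C - (if j = i then (y k0 - x k0) * \<epsilon> else 0))"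
    by (intro sum_mono pdiff_difference_bound[OF LP C twist nb le osc_x osc_y])
  also have "\<dots> = real (card (ball1 i r)) * ((y i - x i) * C) - (y k0 - x k0) * \<epsilon>"
    using i_ball by (simp add: sum_subtractf finite_ball1)
  finally show ?thesis by (simp add: algebra_simps)
qed


subsection \<open>From neighbours to arbitrary sites\<close>

lemma neighbour_ratio_propagates:
  fixes v :: "int ^ 'd::finite \<Rightarrow> real"
  assumes nb: "\<And>i k. l1norm (i - k) = 1 \<Longrightarrow> v k \<le> \<kappa> * v i"
    and "0 \<le> \<kappa>"
  shows "v k \<le> \<kappa> ^ l1norm (i - k) * v i"
proof -
  have "l1norm (i - k) = n \<Longrightarrow> v k \<le> \<kappa> ^ n * v i" for n
  proof (induction n arbitrary: k)
    case 0
    then show ?case by (simp add: l1norm_eq_0_iff)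
  next
    case (Suc n)
    obtain e where e: "l1norm e = 1" "l1norm (i - k - e) = n"
      using l1norm_Suc_split[OF Suc.prems] by blast
    have "v k \<le> \<kappa> * v (k + e)" using nb e(1) by simp
    also have "\<dots> \<le> \<kappa> * (\<kappa> ^ n * v i)"
      using Suc.IH[of "k + e"] e(2) \<open>0 \<le> \<kappa>\<close> by (simp add: diff_diff_eq mult_left_mono)
    finally show ?case by (simp add: mult.assoc)
  qed
  then show ?thesis by blast
qed

lemma strictly_below_if_comparable:
  fixes x y :: "'d::finite config"
  assumes "x < y" and cmp: "\<And>i k. y k - x k \<le> c i k * (y i - x i)"
  shows "strictly_below x y"
  unfolding strictly_below_def
proof
  fix i
  obtain k where k: "x k < y k" using \<open>x < y\<close> by (auto simp: less_fun_def le_fun_def not_le)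
  have "x i \<le> y i" using \<open>x < y\<close> by (simp add: less_fun_def le_fun_def)
  moreover have "x i \<noteq> y i"
  proof
    assume "x i = y i"
    then have "y k - x k \<le> 0" using cmp[where i = i and k = k] by simp
    with k show False by simp
  qed
  ultimately show "x i < y i" by simp
qed

lemma uniform_neighbour_ratio:
  fixes S :: "int ^ 'd::finite \<Rightarrow> 'd config \<Rightarrow> real" and K :: "(real ^ 'd) set"
  assumes LP: "local_potentials r S" and "compact K"
  shows "\<exists>\<kappa>\<ge>1. \<forall>x y \<omega> \<nu> i k. birkhoff x \<and> birkhoff y \<and>
            has_rotation_vector x \<omega> \<and> \<omega> \<in> K \<and> has_rotation_vector y \<nu> \<and> \<nu> \<in> K \<and>
            stationary r S x \<and> stationary r S y \<and> x \<le> y \<and> l1norm (i - k) = 1 \<longrightarrow>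
            y k - x k \<le> \<kappa> * (y i - x i)"
proof -
  obtain C where C: "\<forall>i k j z. \<bar>pdiff k (pdiff i (S j)) z\<bar> \<le> C"
    using potential_second_bounded[OF LP] by blast
  obtain D where D: "0 \<le> D" "\<forall>(x :: 'd config) \<omega> i m. birkhoff x \<and> has_rotation_vector x \<omega> \<and>
      \<omega> \<in> K \<and> m \<in> ball1 i r \<longrightarrow> \<bar>x m - x i\<bar> \<le> D"
    using birkhoff_oscillation_bound[OF \<open>compact K\<close> less_imp_le[OF potential_radius_pos[OF LP]]] by blast
  obtain \<epsilon> where \<epsilon>: "\<epsilon> > 0" "\<forall>i k z. l1norm (i - k) = 1 \<longrightarrow>
      (\<forall>m\<in>ball1 i r. \<bar>z m - z i\<bar> \<le> D + 1) \<longrightarrow> pdiff k (pdiff i (S i)) z \<le> - \<epsilon>"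
    using uniform_twist[OF LP, of "D + 1"] D(1) by auto
  define \<kappa> where "\<kappa> = max 1 (real (card (ball1 (0 :: int ^ 'd) r)) * C / \<epsilon>)"
  have "1 \<le> \<kappa>" unfolding \<kappa>_def by simp
  moreover have "y k - x k \<le> \<kappa> * (y i - x i)"
    if "birkhoff x" "birkhoff y" "has_rotation_vector x \<omega>" "\<omega> \<in> K"
       "has_rotation_vector y \<nu>" "\<nu> \<in> K" "stationary r S x" "stationary r S y" "x \<le> y"
       "l1norm (i - k) = 1" for x y \<omega> \<nu> i k
  proof -
    have "\<epsilon> * (y k - x k) \<le> real (card (ball1 i r)) * C * (y i - x i)"
      using that D(2) by (intro stationary_neighbour_estimate[OF LP C \<epsilon>(2)]) blast+
    then have "y k - x k \<le> real (card (ball1 (0 :: int ^ 'd) r)) * C / \<epsilon> * (y i - x i)"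
      using \<epsilon>(1) unfolding card_ball1[of i r] by (simp add: field_simps)
    also have "\<dots> \<le> \<kappa> * (y i - x i)"
      using \<open>x \<le> y\<close> unfolding \<kappa>_def le_fun_def by (intro mult_right_mono) auto
    finally show ?thesis .
  qed
  ultimately show ?thesis by blast
qed


theorem mainTheorem8:
  fixes S :: "int ^ 'd \<Rightarrow> (int ^ 'd \<Rightarrow> real) \<Rightarrow> real"
    and r :: real
    and K :: "(real ^ 'd) set"
  assumes "local_potentials r S"
    and "compact K"
  shows "\<exists>\<delta> :: nat \<Rightarrow> real. (\<forall>n. \<delta> n > 0) \<and>
    (\<forall>x y \<omega> \<nu>. birkhoff x \<and> birkhoff y \<and>
        has_rotation_vector x \<omega> \<and> \<omega> \<in> K \<and>
        has_rotation_vector y \<nu> \<and> \<nu> \<in> K \<and>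
        stationary r S x \<and> stationary r S y \<and> x < y \<longrightarrow>
        (\<forall>i k. y k - x k \<le> \<delta> (l1norm (i - k)) * (y i - x i)) \<and>
        strictly_below x y)"
proof -
  obtain \<kappa> where "1 \<le> \<kappa>" and ratio: "\<forall>x y \<omega> \<nu> i k. birkhoff x \<and> birkhoff y \<and>
      has_rotation_vector x \<omega> \<and> \<omega> \<in> K \<and> has_rotation_vector y \<nu> \<and> \<nu> \<in> K \<and>
      stationary r S x \<and> stationary r S y \<and> x \<le> y \<and> l1norm (i - k) = 1 \<longrightarrow>
      y k - x k \<le> \<kappa> * (y i - x i)"
    using uniform_neighbour_ratio[OF assms] by blast
  have "(\<forall>i k. y k - x k \<le> \<kappa> ^ l1norm (i - k) * (y i - x i)) \<and> strictly_below x y"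
    if H: "birkhoff x \<and> birkhoff y \<and> has_rotation_vector x \<omega> \<and> \<omega> \<in> K \<and>
        has_rotation_vector y \<nu> \<and> \<nu> \<in> K \<and> stationary r S x \<and> stationary r S y \<and> x < y"
    for x y :: "'d config" and \<omega> \<nu>
  proof -
    have cmp: "y k - x k \<le> \<kappa> ^ l1norm (i - k) * (y i - x i)" for i k
      using ratio H \<open>1 \<le> \<kappa>\<close>
      by (intro neighbour_ratio_propagates[where v = "\<lambda>m. y m - x m"]) (auto simp: less_imp_le)
    moreover have "strictly_below x y" using H cmp by (intro strictly_below_if_comparable) auto
    ultimately show ?thesis by blast
  qed
  moreover have "\<forall>n. 0 < \<kappa> ^ n" using \<open>1 \<le> \<kappa>\<close> by simp
  ultimately show ?thesis by (intro exI[of _ "\<lambda>n. \<kappa> ^ n"]) blast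
qed

end
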